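(* Let $k\ge1$, $D_k=3k^2+3k+1$, and let $c\in P_k$. Then the set $c+V(T_{D_k})=\{c+a\alpha_1+b\alpha_2 : 0\le b\le a\le D_k\}$ contains exactly $\dfrac{D_k+5}{2}$ points of $P_k$.
   Context: Let $\alpha_1=(1,0)$ and $\alpha_2=(-\tfrac12,\tfrac{\sqrt3}{2})$. The triangular lattice $T_\infty$ is the infinite graph with vertex set $\{a\alpha_1+b\alpha_2 : a,b\in\mathbb Z\}$, two vertices being adjacent iff their Euclidean distance is $1$. For $d\ge0$, $T_d$ is the subgraph of $T_\infty$ induced by the vertices $a\alpha_1+b\alpha_2$ with $0\le b\le a\le d$. For $k\ge 1$, let $D_k=3k^2+3k+1$ and let $P_k$ (the pattern $P_{k+1,1}$) be the sublattice $\{x\,u+y\,v : x,y\in\mathbb Z\}$ of the vertex set of $T_\infty$, where $u=(2k+1)\alpha_1+k\alpha_2$ and $v=(k+1)\alpha_1+(2k+1)\alpha_2$ ($v$ is $u$ rotated by $60^\circ$). Consecutive points of $P_k$ along any of the three lattice directions are at distance $D_k$; in particular if $c\in P_k$ then the three corners $c$, $c+D_k\alpha_1$, $c+D_k(\alpha_1+\alpha_2)$ of $c+V(T_{D_k})$ lie in $P_k$. *)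

theory Defs
  imports Complex_Main
begin

definition alpha1 :: complex where
  "alpha1 = 1"

definition alpha2 :: complex where
  "alpha2 = Complex (-1/2) (sqrt 3 / 2)"

definition Dk :: "nat \<Rightarrow> nat" where
  "Dk k = 3 * k^2 + 3 * k + 1"

definition u_vec :: "nat \<Rightarrow> complex" where
  "u_vec k = of_nat (2*k+1) * alpha1 + of_nat k * alpha2"

definition v_vec :: "nat \<Rightarrow> complex" where
  "v_vec k = of_nat (k+1) * alpha1 + of_nat (2*k+1) * alpha2"

definition Pk :: "nat \<Rightarrow> complex set" where
  "Pk k = {of_int x * u_vec k + of_int y * v_vec k | x y :: int. True}"

definition VT :: "nat \<Rightarrow> complex set" where
  "VT d = {of_int a * alpha1 + of_int b * alpha2 | a b :: int. 0 \<le> b \<and> b \<le> a \<and> a \<le> int d}"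

end

theory Submission
  imports Defs "HOL-Library.Product_Plus"
begin

(*
  In the coordinates (a, b) of a alpha1 + b alpha2 the generators are u = (2k+1, k) and
  v = (k+1, 2k+1), and P_k is the lattice of points with b = l a (mod D), where l = 3k+2 and
  D = D_k = det(u, v).  Since l^2 - l + 1 = 3D, both l and l - 1 are invertible mod D.
  Translating by c reduces the count to the triangle 0 <= b <= a <= D.  On its three sides
  the congruence forces D to divide a or b, so only the three corners survive.  Above each
  0 < a < D lies the single candidate b = l a mod D, which differs from 0 and from a; it lies
  below a for exactly half of these a, because a |-> D - a sends l a mod D to D - (l a mod D).
  This gives 3 + (D - 1)/2 points.
*)
definition lattice_point :: "int \<times> int \<Rightarrow> complex" where
  "lattice_point p = of_int (fst p) * alpha1 + of_int (snd p) * alpha2"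

lemma lattice_point_add: "lattice_point (p + q) = lattice_point p + lattice_point q"
  by (simp add: lattice_point_def algebra_simps)

lemma inj_lattice_point: "inj lattice_point"
proof (rule injI)
  fix p q assume eq: "lattice_point p = lattice_point q"
  from arg_cong[OF eq, of Im] have "snd p = snd q"
    by (simp add: lattice_point_def alpha1_def alpha2_def)
  moreover from arg_cong[OF eq, of Re] have "fst p - snd p / 2 = fst q - snd q / 2"
    by (simp add: lattice_point_def alpha1_def alpha2_def)
  ultimately show "p = q"
    by (simp add: prod_eq_iff)
qed

definition triangle :: "int \<Rightarrow> (int \<times> int) set" where
  "triangle d = {(a, b). 0 \<le> b \<and> b \<le> a \<and> a \<le> d}"

lemma VT_eq_image_triangle: "VT d = lattice_point ` triangle (int d)"
  unfolding VT_def triangle_def lattice_point_def image_def by auto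

definition cong_lattice :: "int \<Rightarrow> int \<Rightarrow> (int \<times> int) set" where
  "cong_lattice D l = {(a, b). D dvd b - l * a}"

lemma add_mem_cong_lattice_iff:
  assumes "p \<in> cong_lattice D l"
  shows "p + q \<in> cong_lattice D l \<longleftrightarrow> q \<in> cong_lattice D l"
proof -
  obtain a0 b0 a b where pq: "p = (a0, b0)" "q = (a, b)"
    by fastforce
  have "D dvd b0 - l * a0"
    using assms pq by (simp add: cong_lattice_def)
  have "p + q \<in> cong_lattice D l \<longleftrightarrow> D dvd (b0 - l * a0) + (b - l * a)"
    using pq by (simp add: cong_lattice_def algebra_simps)
  also have "\<dots> \<longleftrightarrow> q \<in> cong_lattice D l"
    using pq dvd_add_right_iff[OF \<open>D dvd b0 - l * a0\<close>] by (simp add: cong_lattice_def)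
  finally show ?thesis .
qed

lemma translate_inter_cong_lattice:
  assumes "p \<in> cong_lattice D l"
  shows "(+) p ` T \<inter> cong_lattice D l = (+) p ` (T \<inter> cong_lattice D l)"
  using add_mem_cong_lattice_iff[OF assms] by auto

lemma dvd_imp_eq_0_or_self:
  fixes a D :: int
  assumes "0 \<le> a" "a \<le> D" "D dvd a"
  shows "a = 0 \<or> a = D"
  using assms zdvd_not_zless[of a D] by fastforce

lemma triangle_boundary_cong_lattice:
  assumes "coprime D l" "coprime D (l - 1)"
    and "(a, b) \<in> triangle D \<inter> cong_lattice D l" and "b = 0 \<or> a = D \<or> b = a"
  shows "(a, b) \<in> {(0, 0), (D, 0), (D, D)}"
proof -
  have range: "0 \<le> b" "b \<le> a" "a \<le> D" and cong: "D dvd b - l * a"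
    using assms(3) by (auto simp: triangle_def cong_lattice_def)
  have eq_0_or_D: "x = 0 \<or> x = D" if "x \<in> {a, b}" "D dvd x" for x
    using that range by (intro dvd_imp_eq_0_or_self) auto
  consider "b = 0" | "a = D" | "b = a"
    using assms(4) by blast
  then show ?thesis
  proof cases
    case 1
    with cong have "D dvd l * a"
      by simp
    with assms(1) have "D dvd a"
      by (simp add: coprime_dvd_mult_right_iff)
    with 1 show ?thesis
      using eq_0_or_D[of a] by auto
  next
    case 2
    from cong have "D dvd (b - l * a) + l * a"
      by (rule dvd_add) (simp add: 2)
    with 2 show ?thesis
      using eq_0_or_D[of b] by auto
  next
    case 3
    then have "(l - 1) * a = - (b - l * a)"
      by (simp add: algebra_simps)
    with cong have "D dvd (l - 1) * a"
      by (simp only: dvd_minus_iff)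
    with assms(2) have "D dvd a"
      by (simp add: coprime_dvd_mult_right_iff)
    with 3 show ?thesis
      using eq_0_or_D[of a] by auto
  qed
qed

lemma mult_mod_pos_if_coprime:
  fixes D l a :: int
  assumes "coprime D l" "0 < a" "a < D"
  shows "0 < l * a mod D"
proof -
  have "\<not> D dvd a"
    using assms(2,3) zdvd_not_zless by blast
  with assms(1) have "l * a mod D \<noteq> 0"
    by (simp add: coprime_dvd_mult_right_iff mod_eq_0_iff_dvd)
  then show ?thesis
    using pos_mod_sign[of D "l * a"] assms(2,3) by linarith
qed

lemma interior_cong_lattice_eq:
  fixes D l :: int
  assumes "coprime D l"
  shows "{(a, b) \<in> cong_lattice D l. 0 < b \<and> b < a \<and> a < D}
    = (\<lambda>a. (a, l * a mod D)) ` {a. 0 < a \<and> a < D \<and> l * a mod D < a}"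
proof (intro set_eqI iffI)
  fix p assume "p \<in> {(a, b) \<in> cong_lattice D l. 0 < b \<and> b < a \<and> a < D}"
  then obtain a b where p: "p = (a, b)" "D dvd b - l * a" "0 < b" "b < a" "a < D"
    by (auto simp: cong_lattice_def)
  then have "b = l * a mod D"
    by (metis mod_eq_dvd_iff mod_pos_pos_trivial order.strict_trans less_imp_le)
  with p show "p \<in> (\<lambda>a. (a, l * a mod D)) ` {a. 0 < a \<and> a < D \<and> l * a mod D < a}"
    by auto
next
  fix p assume "p \<in> (\<lambda>a. (a, l * a mod D)) ` {a. 0 < a \<and> a < D \<and> l * a mod D < a}"
  then obtain a where p: "p = (a, l * a mod D)" "0 < a" "a < D" "l * a mod D < a"
    by auto
  have "0 < l * a mod D"
    using assms p(2,3) by (rule mult_mod_pos_if_coprime)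
  moreover have "D dvd l * a mod D - l * a"
    by (simp add: mod_eq_dvd_iff[symmetric])
  ultimately show "p \<in> {(a, b) \<in> cong_lattice D l. 0 < b \<and> b < a \<and> a < D}"
    using p by (simp add: cong_lattice_def)
qed

lemma card_mod_less_self:
  fixes D l :: int
  assumes "0 < D" "coprime D l" "coprime D (l - 1)"
  shows "2 * int (card {a. 0 < a \<and> a < D \<and> l * a mod D < a}) = D - 1"
proof -
  define r where "r a = l * a mod D" for a
  define A where "A = {a. 0 < a \<and> a < D \<and> r a < a}"
  define B where "B = {a. 0 < a \<and> a < D \<and> a < r a}"
  have r_pos: "0 < r a" if "0 < a" "a < D" for a
    unfolding r_def using assms(2) that by (rule mult_mod_pos_if_coprime)
  have r_ne_self: "r a \<noteq> a" if "0 < a" "a < D" for a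
  proof
    assume "r a = a"
    then have "l * a mod D = a mod D"
      using that by (simp add: r_def)
    then have "D dvd (l - 1) * a"
      by (simp add: mod_eq_dvd_iff left_diff_distrib)
    with assms(3) have "D dvd a"
      by (simp add: coprime_dvd_mult_right_iff)
    with that show False
      using zdvd_not_zless by blast
  qed
  have r_reflect: "r (D - a) = D - r a" if "0 < a" "a < D" for a
  proof -
    have "r (D - a) = (- (l * a)) mod D"
      by (simp add: r_def mod_eq_dvd_iff algebra_simps)
    also have "\<dots> = D - r a"
      using r_pos[OF that] by (simp add: r_def zmod_zminus1_eq_if)
    finally show ?thesis .
  qed
  have "B = (\<lambda>a. D - a) ` A"
  proof (intro set_eqI iffI)
    fix x assume "x \<in> B"
    then have "D - x \<in> A" and "x = D - (D - x)"
      using r_reflect[of x] by (auto simp: A_def B_def)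
    then show "x \<in> (\<lambda>a. D - a) ` A"
      by blast
  qed (use r_reflect in \<open>auto simp: A_def B_def\<close>)
  then have "card B = card A"
    by (simp add: card_image inj_on_def)
  moreover have "A \<union> B = {0<..<D}"
    using r_ne_self by (force simp: A_def B_def neq_iff)
  moreover have "A \<inter> B = {}"
    by (auto simp: A_def B_def)
  moreover have "finite A" "finite B"
    by (auto simp: A_def B_def intro: finite_subset[of _ "{0<..<D}"])
  ultimately have "card A + card A = nat (D - 1)"
    using card_Un_disjoint[of A B] by simp
  then show ?thesis
    using assms(1) by (simp add: A_def r_def)
qed

lemma card_triangle_inter_cong_lattice:
  fixes D l :: int
  assumes "0 < D" "coprime D l" "coprime D (l - 1)"
  shows "2 * int (card (triangle D \<inter> cong_lattice D l)) = D + 5"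
proof -
  define C where "C = {(0, 0), (D, 0), (D, D)}"
  define I where "I = {(a, b) \<in> cong_lattice D l. 0 < b \<and> b < a \<and> a < D}"
  have "C \<subseteq> triangle D \<inter> cong_lattice D l"
    using assms(1) by (auto simp: C_def triangle_def cong_lattice_def)
  then have split: "triangle D \<inter> cong_lattice D l = C \<union> I"
    using triangle_boundary_cong_lattice[OF assms(2,3)]
    by (fastforce simp: C_def I_def triangle_def)
  have corners: "finite C" "card C = 3" "C \<inter> I = {}"
    using assms(1) by (auto simp: C_def I_def)
  have "I = (\<lambda>a. (a, l * a mod D)) ` {a. 0 < a \<and> a < D \<and> l * a mod D < a}"
    unfolding I_def using assms(2) by (rule interior_cong_lattice_eq)
  moreover have "finite {a. 0 < a \<and> a < D \<and> l * a mod D < a}"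
    by (rule finite_subset[of _ "{0<..<D}"]) auto
  ultimately have "finite I" "card I = card {a. 0 < a \<and> a < D \<and> l * a mod D < a}"
    by (auto simp: card_image inj_on_def)
  with split corners have "card (triangle D \<inter> cong_lattice D l)
      = 3 + card {a. 0 < a \<and> a < D \<and> l * a mod D < a}"
    by (simp add: card_Un_disjoint)
  then show ?thesis
    using card_mod_less_self[OF assms] by simp
qed

lemma dvd_sq_minus_plus_one_imp_coprime:
  fixes D l :: int
  assumes "D dvd l\<^sup>2 - l + 1"
  shows "coprime D l" "coprime D (l - 1)"
proof -
  have "l\<^sup>2 - l + 1 = l * (l - 1) + 1"
    by (simp add: algebra_simps power2_eq_square)
  with assms have "c dvd 1" if "c dvd D" "c dvd l \<or> c dvd l - 1" for c
    using that by (metis dvd_add_right_iff dvd_mult dvd_mult2 dvd_trans)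
  then show "coprime D l" "coprime D (l - 1)"
    by (auto intro: coprimeI)
qed

lemma Pk_eq_image_cong_lattice:
  "Pk k = lattice_point ` cong_lattice (int (Dk k)) (3 * int k + 2)"
proof -
  define K where "K = int k"
  define D where "D = 3 * K\<^sup>2 + 3 * K + 1"
  have D: "int (Dk k) = D"
    by (simp add: Dk_def D_def K_def)
  have coords: "of_int x * u_vec k + of_int y * v_vec k
      = lattice_point (x * (2 * K + 1) + y * (K + 1), x * K + y * (2 * K + 1))" for x y
    by (simp add: u_vec_def v_vec_def lattice_point_def K_def algebra_simps)
  show ?thesis
    unfolding D K_def[symmetric]
  proof (intro set_eqI iffI)
    fix z assume "z \<in> Pk k"
    then obtain x y where z: "z = of_int x * u_vec k + of_int y * v_vec k"
      by (auto simp: Pk_def)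
    have "(x * K + y * (2 * K + 1)) - (3 * K + 2) * (x * (2 * K + 1) + y * (K + 1))
        = D * (- 2 * x - y)"
      by (simp add: D_def algebra_simps power2_eq_square)
    then have "(x * (2 * K + 1) + y * (K + 1), x * K + y * (2 * K + 1))
        \<in> cong_lattice D (3 * K + 2)"
      by (simp add: cong_lattice_def)
    then show "z \<in> lattice_point ` cong_lattice D (3 * K + 2)"
      by (simp add: z coords)
  next
    fix z assume "z \<in> lattice_point ` cong_lattice D (3 * K + 2)"
    then obtain a b m where z: "z = lattice_point (a, b)" and "b - (3 * K + 2) * a = D * m"
      by (auto simp: cong_lattice_def elim!: dvdE)
    then have "(a, b) = ((- a - (K + 1) * m) * (2 * K + 1) + (2 * a + (2 * K + 1) * m) * (K + 1),
        (- a - (K + 1) * m) * K + (2 * a + (2 * K + 1) * m) * (2 * K + 1))"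
      by (simp add: D_def algebra_simps power2_eq_square)
    then have "z = of_int (- a - (K + 1) * m) * u_vec k
        + of_int (2 * a + (2 * K + 1) * m) * v_vec k"
      unfolding z coords by (rule arg_cong)
    then show "z \<in> Pk k"
      unfolding Pk_def by blast
  qed
qed

theorem lemma1:
  fixes k :: nat and c :: complex
  assumes "k \<ge> 1" and "c \<in> Pk k"
  shows "real (card ((\<lambda>p. c + p) ` VT (Dk k) \<inter> Pk k)) = (real (Dk k) + 5) / 2"
proof -
  define D where "D = int (Dk k)"
  define L where "L = cong_lattice D (3 * int k + 2)"
  have "D > 0"
    by (simp add: D_def Dk_def add_pos_nonneg)
  have "(3 * int k + 2)\<^sup>2 - (3 * int k + 2) + 1 = D * 3"
    by (simp add: D_def Dk_def algebra_simps power2_eq_square)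
  then have count: "2 * int (card (triangle D \<inter> L)) = D + 5"
    unfolding L_def
    using card_triangle_inter_cong_lattice[OF \<open>D > 0\<close>] dvd_sq_minus_plus_one_imp_coprime
    by (metis dvd_triv_left)
  obtain p where "p \<in> L" and c: "c = lattice_point p"
    using assms(2) by (auto simp: Pk_eq_image_cong_lattice L_def D_def)
  have "(\<lambda>q. c + q) ` lattice_point ` T = lattice_point ` (+) p ` T" for T
    by (simp add: c image_image lattice_point_add)
  then have "(\<lambda>q. c + q) ` VT (Dk k) \<inter> Pk k = lattice_point ` ((+) p ` triangle D \<inter> L)"
    by (simp add: VT_eq_image_triangle Pk_eq_image_cong_lattice image_Int[OF inj_lattice_point]
        L_def D_def)
  also have "\<dots> = lattice_point ` (+) p ` (triangle D \<inter> L)"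
    using \<open>p \<in> L\<close> unfolding L_def by (simp add: translate_inter_cong_lattice)
  finally have "card ((\<lambda>q. c + q) ` VT (Dk k) \<inter> Pk k) = card (triangle D \<inter> L)"
    by (simp add: card_image inj_on_def inj_lattice_point[THEN inj_eq])
  with count show ?thesis
    by (simp add: D_def)
qed

end
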